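(* Let $\alpha$ be a Riemannian metric and $\beta$ a nonzero closed $1$-form on an $n$-dimensional manifold $M$ such that ${}^\alpha R^i{}_j=\mu(\alpha^2\delta^i{}_j-y^iy_j)$ for a constant $\mu$ and $b_{i|j}=c(x)a_{ij}$ with $c^2=\kappa-\mu b^2$ for a constant $\kappa$ (where $b=\|\beta\|_\alpha$). Suppose that locally $M=\mathbb{R}\times\breve M$, where $\breve M$ is an $(n-1)$-dimensional manifold with a Riemannian metric $\breve\alpha$, and $$\alpha^2=dt\otimes dt+h^2(t)\,\breve\alpha^2,\qquad \beta=h(t)\,dt,$$ with $t$ the parameter of $\mathbb{R}$ and $h$ a function of $t$ only. Then $\breve\alpha$ is of constant sectional curvature $\kappa$.
   Context: ${}^\alpha R^i{}_j$ is the Riemann curvature tensor of $\alpha$, $y_j=a_{jk}y^k$ where $\alpha=\sqrt{a_{ij}y^iy^j}$, and $b_{i|j}$ are the coefficients of the covariant derivative of $\beta=b_iy^i$ with respect to $\alpha$. *)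

theory Defs
  imports "HOL-Analysis.Analysis"
begin

text \<open>Local coordinate calculus on an open set of real^'n ('n a finite index type).
  A Riemannian metric is given by its component matrix a x, a 1-form by its
  component vector b x.\<close>

definition pd :: "(real^'n \<Rightarrow> real) \<Rightarrow> 'n \<Rightarrow> real^'n \<Rightarrow> real" where
  "pd f k x = deriv (\<lambda>s. f (x + s *\<^sub>R axis k 1)) 0"

fun pds :: "'n list \<Rightarrow> (real^'n \<Rightarrow> real) \<Rightarrow> real^'n \<Rightarrow> real" where
  "pds [] f = f"
| "pds (k # ks) f = pd (pds ks f) k"

definition smooth_fun_on :: "(real^'n) set \<Rightarrow> (real^'n \<Rightarrow> real) \<Rightarrow> bool" where
  "smooth_fun_on U f \<longleftrightarrow>
     (\<forall>ks. continuous_on U (pds ks f) \<and>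
        (\<forall>k. \<forall>x\<in>U. (\<lambda>s. pds ks f (x + s *\<^sub>R axis k 1)) differentiable (at 0)))"

definition riemannian_metric_on :: "(real^'n) set \<Rightarrow> (real^'n \<Rightarrow> real^'n^'n) \<Rightarrow> bool" where
  "riemannian_metric_on U a \<longleftrightarrow> open U \<and>
     (\<forall>i j. smooth_fun_on U (\<lambda>x. a x $ i $ j)) \<and>
     (\<forall>x\<in>U. \<forall>i j. a x $ i $ j = a x $ j $ i) \<and>
     (\<forall>x\<in>U. \<forall>v. v \<noteq> 0 \<longrightarrow> (\<Sum>i\<in>UNIV. \<Sum>j\<in>UNIV. a x $ i $ j * v $ i * v $ j) > 0)"

definition inv_metric :: "(real^'n \<Rightarrow> real^'n^'n) \<Rightarrow> real^'n \<Rightarrow> real^'n^'n" where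
  "inv_metric a x = matrix_inv (a x)"

definition christoffel :: "(real^'n \<Rightarrow> real^'n^'n) \<Rightarrow> 'n \<Rightarrow> 'n \<Rightarrow> 'n \<Rightarrow> real^'n \<Rightarrow> real" where
  "christoffel a k i j x = (1/2) * (\<Sum>l\<in>UNIV. inv_metric a x $ k $ l *
      (pd (\<lambda>z. a z $ j $ l) i x + pd (\<lambda>z. a z $ i $ l) j x - pd (\<lambda>z. a z $ i $ j) l x))"

text \<open>Riemann tensor R^i_{jkl} = d_k Gamma^i_{jl} - d_l Gamma^i_{jk}
   + Gamma^i_{km} Gamma^m_{jl} - Gamma^i_{lm} Gamma^m_{jk},
   so that R(d_k, d_l) d_j = R^i_{jkl} d_i.\<close>
definition riemann :: "(real^'n \<Rightarrow> real^'n^'n) \<Rightarrow> 'n \<Rightarrow> 'n \<Rightarrow> 'n \<Rightarrow> 'n \<Rightarrow> real^'n \<Rightarrow> real" where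
  "riemann a i j k l x =
     pd (christoffel a i j l) k x - pd (christoffel a i j k) l x
     + (\<Sum>m\<in>UNIV. christoffel a i k m x * christoffel a m j l x
                 - christoffel a i l m x * christoffel a m j k x)"

text \<open>Riemann curvature R^i_j(x,y) of alpha (R_y(v) = R(v,y)y), in Finsler notation:
   R^i_j = R^i_{k j l} y^k y^l.\<close>
definition riemann_curv :: "(real^'n \<Rightarrow> real^'n^'n) \<Rightarrow> 'n \<Rightarrow> 'n \<Rightarrow> real^'n \<Rightarrow> real^'n \<Rightarrow> real" where
  "riemann_curv a i j x y = (\<Sum>k\<in>UNIV. \<Sum>l\<in>UNIV. riemann a i k j l x * y $ k * y $ l)"

definition metric_ip :: "(real^'n \<Rightarrow> real^'n^'n) \<Rightarrow> real^'n \<Rightarrow> real^'n \<Rightarrow> real^'n \<Rightarrow> real" where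
  "metric_ip a x u v = (\<Sum>i\<in>UNIV. \<Sum>j\<in>UNIV. a x $ i $ j * u $ i * v $ j)"

definition lower :: "(real^'n \<Rightarrow> real^'n^'n) \<Rightarrow> real^'n \<Rightarrow> real^'n \<Rightarrow> 'n \<Rightarrow> real" where
  "lower a x y j = (\<Sum>k\<in>UNIV. a x $ j $ k * y $ k)"

definition cov_deriv_1form :: "(real^'n \<Rightarrow> real^'n^'n) \<Rightarrow> (real^'n \<Rightarrow> real^'n) \<Rightarrow> 'n \<Rightarrow> 'n \<Rightarrow> real^'n \<Rightarrow> real" where
  "cov_deriv_1form a b i j x = pd (\<lambda>z. b z $ i) j x - (\<Sum>k\<in>UNIV. christoffel a k i j x * b x $ k)"

definition norm2_1form :: "(real^'n \<Rightarrow> real^'n^'n) \<Rightarrow> (real^'n \<Rightarrow> real^'n) \<Rightarrow> real^'n \<Rightarrow> real" where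
  "norm2_1form a b x = (\<Sum>i\<in>UNIV. \<Sum>j\<in>UNIV. inv_metric a x $ i $ j * b x $ i * b x $ j)"

definition closed_1form_on :: "(real^'n) set \<Rightarrow> (real^'n \<Rightarrow> real^'n) \<Rightarrow> bool" where
  "closed_1form_on U b \<longleftrightarrow> (\<forall>x\<in>U. \<forall>i j. pd (\<lambda>z. b z $ j) i x = pd (\<lambda>z. b z $ i) j x)"

definition sectional_curvature :: "(real^'n \<Rightarrow> real^'n^'n) \<Rightarrow> real^'n \<Rightarrow> real^'n \<Rightarrow> real^'n \<Rightarrow> real" where
  "sectional_curvature a x u v =
     (\<Sum>i\<in>UNIV. \<Sum>m\<in>UNIV. \<Sum>p\<in>UNIV. \<Sum>q\<in>UNIV. \<Sum>r\<in>UNIV.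
        a x $ i $ m * riemann a m r p q x * u $ i * u $ p * v $ q * v $ r)
     / (metric_ip a x u u * metric_ip a x v v - (metric_ip a x u v)^2)"

definition const_sectional_curvature_on :: "(real^'n) set \<Rightarrow> (real^'n \<Rightarrow> real^'n^'n) \<Rightarrow> real \<Rightarrow> bool" where
  "const_sectional_curvature_on U a K \<longleftrightarrow>
     (\<forall>x\<in>U. \<forall>u v. (\<forall>s t. s *\<^sub>R u + t *\<^sub>R v = 0 \<longrightarrow> s = 0 \<and> t = 0)
        \<longrightarrow> sectional_curvature a x u v = K)"

text \<open>Coordinates on R x M-breve: index type 'm option, None = t-direction.\<close>
definition tcoord :: "real^('m::finite option) \<Rightarrow> real" where
  "tcoord x = x $ None"

definition fibre_coord :: "real^('m::finite option) \<Rightarrow> real^'m" where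
  "fibre_coord x = (\<chi> i. x $ Some i)"

end

theory Submission
  imports Defs
begin

text \<open>In the chart \<open>I \<times> V\<close> the metric is \<open>diag(1, h\<^sup>2 ab)\<close>. Its Christoffel symbols are those
  of \<open>ab\<close> together with \<open>\<Gamma>\<^sup>t\<^sub>p\<^sub>q = -h h' ab\<^sub>p\<^sub>q\<close> and \<open>\<Gamma>\<^sup>r\<^sub>p\<^sub>t = (h'/h) \<delta>\<^sup>r\<^sub>p\<close>, so for a fibre vector
  \<open>v\<close> the Gauss equation gives \<open>R\<^sub>\<alpha>(v) = R\<^sub>a\<^sub>b(v) - h'\<^sup>2 (|v|\<^sup>2 \<delta> - v v\<^sub>\<flat>)\<close> (norm and lowering
  taken w.r.t. \<open>ab\<close>), while \<open>\<alpha>(v)\<^sup>2 = h\<^sup>2 |v|\<^sup>2\<close>. For \<open>\<beta> = h dt\<close> the component \<open>b\<^sub>t\<^sub>|\<^sub>t = h'\<close> forces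
  \<open>c = h'\<close>, hence \<open>h'\<^sup>2 = \<kappa> - \<mu> h\<^sup>2\<close>. The curvature hypothesis on fibre vectors thus says
  \<open>R\<^sub>a\<^sub>b(v) = (h'\<^sup>2 + \<mu> h\<^sup>2)(|v|\<^sup>2 \<delta> - v v\<^sub>\<flat>) = \<kappa> (|v|\<^sup>2 \<delta> - v v\<^sub>\<flat>)\<close>, so \<open>ab\<close> has constant
  sectional curvature \<open>\<kappa>\<close>.\<close>

lemma sum_UNIV_option:
  fixes f :: "'m::finite option \<Rightarrow> 'a::comm_monoid_add"
  shows "(\<Sum>i\<in>UNIV. f i) = f None + (\<Sum>p\<in>UNIV. f (Some p))"
  by (simp add: UNIV_option_conv sum.reindex)

lemma pd_cong_open:
  assumes "open S" "x \<in> S" "\<And>z. z \<in> S \<Longrightarrow> f z = g z"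
  shows "pd f k x = pd g k x"
proof -
  let ?T = "(\<lambda>s::real. x + s *\<^sub>R axis k 1) -` S"
  have T: "open ?T" "0 \<in> ?T"
    using assms(2) by (auto intro!: open_vimage[OF assms(1)] continuous_intros)
  have "((\<lambda>s. f (x + s *\<^sub>R axis k 1)) has_field_derivative D) (at 0) \<longleftrightarrow>
        ((\<lambda>s. g (x + s *\<^sub>R axis k 1)) has_field_derivative D) (at 0)" for D
  proof
    assume "((\<lambda>s. f (x + s *\<^sub>R axis k 1)) has_field_derivative D) (at 0)"
    then show "((\<lambda>s. g (x + s *\<^sub>R axis k 1)) has_field_derivative D) (at 0)"
      by (rule has_field_derivative_transform_within_open[OF _ T]) (simp add: assms(3))
  next
    assume "((\<lambda>s. g (x + s *\<^sub>R axis k 1)) has_field_derivative D) (at 0)"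
    then show "((\<lambda>s. f (x + s *\<^sub>R axis k 1)) has_field_derivative D) (at 0)"
      by (rule has_field_derivative_transform_within_open[OF _ T]) (simp add: assms(3))
  qed
  then show ?thesis unfolding pd_def deriv_def by simp
qed

lemma pd_const [simp]: "pd (\<lambda>z. c) k x = 0"
  by (simp add: pd_def)

lemma smooth_fun_on_differentiable_along_axis:
  assumes "smooth_fun_on U f" "x \<in> U"
  shows "(\<lambda>s. f (x + s *\<^sub>R axis k 1)) differentiable (at 0)"
proof -
  have "\<forall>k. \<forall>x\<in>U. (\<lambda>s. pds [] f (x + s *\<^sub>R axis k 1)) differentiable (at 0)"
    using assms(1) unfolding smooth_fun_on_def by blast
  then show ?thesis using assms(2) by simp
qed

lemma matrix_inv_unique:
  fixes A B :: "real^'n^'n"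
  assumes "A ** B = mat 1" "B ** A = mat 1"
  shows "matrix_inv A = B"
  unfolding matrix_inv_def
proof (rule some_equality)
  fix C assume "A ** C = mat 1 \<and> C ** A = mat 1"
  then have "C = (B ** A) ** C" using assms by (simp add: matrix_mul_lid)
  also have "\<dots> = B" using \<open>A ** C = mat 1 \<and> C ** A = mat 1\<close>
    by (simp flip: matrix_mul_assoc)
  finally show "C = B" .
qed (use assms in simp)

lemma matrix_inv_posdef:
  fixes A :: "real^'n^'n"
  assumes "\<And>v. v \<noteq> 0 \<Longrightarrow> (\<Sum>i\<in>UNIV. \<Sum>j\<in>UNIV. A $ i $ j * v $ i * v $ j) > 0"
  shows "matrix_inv A ** A = mat 1" "A ** matrix_inv A = mat 1"
proof -
  have "A *v v = 0 \<Longrightarrow> v = 0" for v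
  proof -
    assume "A *v v = 0"
    have "(\<Sum>i\<in>UNIV. \<Sum>j\<in>UNIV. A $ i $ j * v $ i * v $ j) = (\<Sum>i\<in>UNIV. v $ i * (A *v v) $ i)"
      by (simp add: matrix_vector_mult_def sum_distrib_left mult_ac)
    also have "\<dots> = 0" using \<open>A *v v = 0\<close> by simp
    finally show "v = 0" using assms by force
  qed
  then have "invertible A" using matrix_left_invertible_ker invertible_left_inverse by blast
  then obtain B where "A ** B = mat 1" "B ** A = mat 1" unfolding invertible_def by blast
  then show "matrix_inv A ** A = mat 1" "A ** matrix_inv A = mat 1"
    using matrix_inv_unique by auto
qed

definition option_block :: "real \<Rightarrow> real^'m^'m \<Rightarrow> real^('m::finite option)^('m option)" where
  "option_block c A = (\<chi> i j. case (i, j) of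
     (None, None) \<Rightarrow> 1 | (Some p, Some q) \<Rightarrow> c * A $ p $ q | _ \<Rightarrow> 0)"

lemma option_block_mult: "option_block c A ** option_block d B = option_block (c * d) (A ** B)"
proof -
  have "(option_block c A ** option_block d B) $ i $ j = option_block (c * d) (A ** B) $ i $ j" for i j
    by (cases i; cases j)
       (simp_all add: option_block_def matrix_matrix_mult_def sum_UNIV_option sum_distrib_left mult_ac)
  then show ?thesis by (simp add: vec_eq_iff)
qed

lemma option_block_1_mat_1: "option_block 1 (mat 1) = mat 1"
  by (simp add: vec_eq_iff option_block_def mat_def split: option.split)

lemma matrix_inv_option_block:
  assumes "A ** B = mat 1" "B ** A = mat 1" "c \<noteq> 0"
  shows "matrix_inv (option_block c A) = option_block (1 / c) B"
  by (rule matrix_inv_unique) (simp_all add: option_block_mult option_block_1_mat_1 assms)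

lemma metric_ip_commute:
  assumes "\<And>i j. g y $ i $ j = g y $ j $ i"
  shows "metric_ip g y u v = metric_ip g y v u"
proof -
  have "metric_ip g y u v = (\<Sum>j\<in>UNIV. \<Sum>i\<in>UNIV. g y $ i $ j * u $ i * v $ j)"
    unfolding metric_ip_def by (rule sum.swap)
  also have "\<dots> = metric_ip g y v u"
    unfolding metric_ip_def by (intro sum.cong refl) (simp add: assms[of _ j for j] mult_ac)
  finally show ?thesis .
qed

lemma metric_ip_scaleR_add_self:
  "metric_ip g y (s *\<^sub>R u + t *\<^sub>R v) (s *\<^sub>R u + t *\<^sub>R v)
     = s\<^sup>2 * metric_ip g y u u + s * t * (metric_ip g y u v + metric_ip g y v u) + t\<^sup>2 * metric_ip g y v v"
proof -
  have "metric_ip g y (s *\<^sub>R u + t *\<^sub>R v) (s *\<^sub>R u + t *\<^sub>R v)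
     = (\<Sum>i\<in>UNIV. \<Sum>j\<in>UNIV. s\<^sup>2 * (g y $ i $ j * u $ i * u $ j) + s * t * (g y $ i $ j * u $ i * v $ j)
         + s * t * (g y $ i $ j * v $ i * u $ j) + t\<^sup>2 * (g y $ i $ j * v $ i * v $ j))"
    unfolding metric_ip_def by (intro sum.cong refl) (simp add: algebra_simps power2_eq_square)
  then show ?thesis
    unfolding metric_ip_def by (simp only: sum.distrib sum_distrib_left distrib_left)
qed

text \<open>With \<open>w = Q(v,v) u - Q(u,v) v\<close> one has \<open>Q(w,w) = Q(v,v) \<cdot> (Q(u,u) Q(v,v) - Q(u,v)\<^sup>2)\<close>.\<close>

lemma gram_det_pos:
  assumes posdef: "\<And>w. w \<noteq> 0 \<Longrightarrow> metric_ip g y w w > 0"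
    and sym: "\<And>i j. g y $ i $ j = g y $ j $ i"
    and indep: "\<forall>s t. s *\<^sub>R u + t *\<^sub>R v = 0 \<longrightarrow> s = 0 \<and> t = 0"
  shows "metric_ip g y u u * metric_ip g y v v - (metric_ip g y u v)\<^sup>2 > 0"
proof -
  let ?Q = "metric_ip g y"
  have "v \<noteq> 0" using indep[rule_format, of 0 1] by auto
  then have Qv: "?Q v v > 0" by (rule posdef)
  define w where "w = ?Q v v *\<^sub>R u + (- ?Q u v) *\<^sub>R v"
  have "w \<noteq> 0" using indep Qv unfolding w_def by fastforce
  then have "?Q w w > 0" by (rule posdef)
  moreover have "?Q w w = ?Q v v * (?Q u u * ?Q v v - (?Q u v)\<^sup>2)"
    unfolding w_def metric_ip_scaleR_add_self metric_ip_commute[of g y v u, OF sym]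
    by (simp add: power2_eq_square algebra_simps)
  ultimately show ?thesis using Qv by (simp add: zero_less_mult_iff)
qed

lemma sectional_curvature_numerator_eq:
  "(\<Sum>i\<in>UNIV. \<Sum>m\<in>UNIV. \<Sum>p\<in>UNIV. \<Sum>q\<in>UNIV. \<Sum>r\<in>UNIV.
      g y $ i $ m * riemann g m r p q y * u $ i * u $ p * v $ q * v $ r)
   = (\<Sum>i\<in>UNIV. \<Sum>m\<in>UNIV. \<Sum>p\<in>UNIV. g y $ i $ m * u $ i * u $ p * riemann_curv g m p y v)"
  unfolding riemann_curv_def
  by (subst (2) sum.swap) (simp add: sum_distrib_left mult_ac)

text \<open>Contracting \<open>R\<^sup>i\<^sub>j = K (\<alpha>\<^sup>2 \<delta>\<^sup>i\<^sub>j - y\<^sup>i y\<^sub>j)\<close> with \<open>u\<^sub>i u\<^sup>j\<close> turns the numerator of a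
  sectional curvature into \<open>K\<close> times the Gram determinant of \<open>u, v\<close>.\<close>

lemma const_sectional_curvature_onI:
  fixes g :: "real^'n \<Rightarrow> real^'n^'n"
  assumes g: "riemannian_metric_on V g"
    and iso: "\<And>y v m p. y \<in> V \<Longrightarrow> riemann_curv g m p y v
                 = K * (metric_ip g y v v * (if m = p then 1 else 0) - v $ m * lower g y v p)"
  shows "const_sectional_curvature_on V g K"
  unfolding const_sectional_curvature_on_def
proof (intro ballI allI impI)
  fix y u v :: "real^'n" assume y: "y \<in> V" and indep: "\<forall>s t. s *\<^sub>R u + t *\<^sub>R v = 0 \<longrightarrow> s = 0 \<and> t = 0"
  let ?Q = "metric_ip g y"
  have sym: "\<And>i j. g y $ i $ j = g y $ j $ i" and posdef: "\<And>w. w \<noteq> 0 \<Longrightarrow> ?Q w w > 0"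
    using g y unfolding riemannian_metric_on_def metric_ip_def by blast+
  have lower_contract: "(\<Sum>p\<in>UNIV. u $ p * lower g y v p) = ?Q u v"
    by (simp add: lower_def metric_ip_def sum_distrib_left mult_ac)
  have "(\<Sum>i\<in>UNIV. \<Sum>m\<in>UNIV. \<Sum>p\<in>UNIV. g y $ i $ m * u $ i * u $ p * riemann_curv g m p y v)
      = (\<Sum>i\<in>UNIV. \<Sum>m\<in>UNIV. K * ?Q v v * (g y $ i $ m * u $ i * u $ m)
           - K * ?Q u v * (g y $ i $ m * u $ i * v $ m))"
  proof (intro sum.cong refl)
    fix i m
    have "(\<Sum>p\<in>UNIV. g y $ i $ m * u $ i * u $ p * riemann_curv g m p y v)
        = (\<Sum>p\<in>UNIV. K * ?Q v v * (g y $ i $ m * u $ i) * (if m = p then u $ p else 0)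
             - K * (g y $ i $ m * u $ i * v $ m) * (u $ p * lower g y v p))"
      by (intro sum.cong refl) (simp add: iso[OF y] algebra_simps)
    also have "\<dots> = K * ?Q v v * (g y $ i $ m * u $ i) * (\<Sum>p\<in>UNIV. if m = p then u $ p else 0)
        - K * (g y $ i $ m * u $ i * v $ m) * (\<Sum>p\<in>UNIV. u $ p * lower g y v p)"
      by (simp only: sum_subtractf sum_distrib_left)
    finally show "(\<Sum>p\<in>UNIV. g y $ i $ m * u $ i * u $ p * riemann_curv g m p y v)
        = K * ?Q v v * (g y $ i $ m * u $ i * u $ m) - K * ?Q u v * (g y $ i $ m * u $ i * v $ m)"
      unfolding sum.delta lower_contract by (simp add: algebra_simps)
  qed
  also have "\<dots> = K * ?Q v v * (\<Sum>i\<in>UNIV. \<Sum>m\<in>UNIV. g y $ i $ m * u $ i * u $ m)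
      - K * ?Q u v * (\<Sum>i\<in>UNIV. \<Sum>m\<in>UNIV. g y $ i $ m * u $ i * v $ m)"
    by (simp only: sum_subtractf sum_distrib_left)
  also have "\<dots> = K * (?Q u u * ?Q v v - (?Q u v)\<^sup>2)"
    by (simp only: metric_ip_def[symmetric]) (simp add: power2_eq_square algebra_simps)
  finally have numerator: "(\<Sum>i\<in>UNIV. \<Sum>m\<in>UNIV. \<Sum>p\<in>UNIV. g y $ i $ m * u $ i * u $ p * riemann_curv g m p y v)
      = K * (?Q u u * ?Q v v - (?Q u v)\<^sup>2)" .
  show "sectional_curvature g y u v = K"
    unfolding sectional_curvature_def sectional_curvature_numerator_eq numerator
    using gram_det_pos[OF posdef sym indep] by simp
qed

definition option_vec :: "real \<Rightarrow> real^'m \<Rightarrow> real^('m::finite option)" where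
  "option_vec t y = (\<chi> i. case i of None \<Rightarrow> t | Some p \<Rightarrow> y $ p)"

lemma option_vec_nth [simp]:
  "option_vec t y $ None = t" "option_vec t y $ Some p = y $ p"
  by (simp_all add: option_vec_def)

lemma tcoord_option_vec [simp]: "tcoord (option_vec t y) = t"
  by (simp add: tcoord_def)

lemma fibre_coord_option_vec [simp]: "fibre_coord (option_vec t y) = y"
  by (simp add: fibre_coord_def vec_eq_iff)

lemma tcoord_add_axis_None [simp]: "tcoord (x + s *\<^sub>R axis None 1) = tcoord x + s"
  by (simp add: tcoord_def axis_def)

lemma tcoord_add_axis_Some [simp]: "tcoord (x + s *\<^sub>R axis (Some k) 1) = tcoord x"
  by (simp add: tcoord_def axis_def)

lemma fibre_coord_add_axis_None [simp]: "fibre_coord (x + s *\<^sub>R axis None 1) = fibre_coord x"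
  by (simp add: fibre_coord_def axis_def vec_eq_iff)

lemma fibre_coord_add_axis_Some [simp]:
  "fibre_coord (x + s *\<^sub>R axis (Some k) 1) = fibre_coord x + s *\<^sub>R axis k 1"
  by (simp add: fibre_coord_def axis_def vec_eq_iff)

lemma pd_fibre_coord: "pd (\<lambda>z. F (fibre_coord z)) (Some k) x = pd F k (fibre_coord x)"
  by (simp add: pd_def)

lemma pd_tcoord_mult_fibre_None:
  assumes "(f has_real_derivative D) (at (tcoord x))"
  shows "pd (\<lambda>z. f (tcoord z) * g (fibre_coord z)) None x = D * g (fibre_coord x)"
proof -
  have "((\<lambda>s. f (tcoord x + s)) has_real_derivative D) (at 0)"
    using DERIV_shift[of f D 0 "tcoord x"] assms by (simp add: add.commute)
  then have "((\<lambda>s. f (tcoord x + s) * g (fibre_coord x)) has_real_derivative D * g (fibre_coord x)) (at 0)"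
    by (rule DERIV_cmult_right)
  then show ?thesis
    unfolding pd_def tcoord_add_axis_None fibre_coord_add_axis_None by (rule DERIV_imp_deriv)
qed

lemma pd_tcoord_mult_fibre_Some:
  assumes "(\<lambda>s. g (fibre_coord x + s *\<^sub>R axis k 1)) differentiable (at 0)"
  shows "pd (\<lambda>z. f (tcoord z) * g (fibre_coord z)) (Some k) x = f (tcoord x) * pd g k (fibre_coord x)"
proof -
  obtain D where D: "((\<lambda>s. g (fibre_coord x + s *\<^sub>R axis k 1)) has_real_derivative D) (at 0)"
    using assms real_differentiableE by blast
  then have "((\<lambda>s. f (tcoord x) * g (fibre_coord x + s *\<^sub>R axis k 1)) has_real_derivative f (tcoord x) * D) (at 0)"
    by (rule DERIV_cmult)
  then show ?thesis
    unfolding pd_def tcoord_add_axis_Some fibre_coord_add_axis_Some DERIV_imp_deriv[OF D] by (rule DERIV_imp_deriv)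
qed

lemma differentiable_at_tcoord_if_smooth:
  assumes "open U" "x \<in> U" "smooth_fun_on U f" "\<And>z. z \<in> U \<Longrightarrow> f z = h (tcoord z)"
  shows "h differentiable (at (tcoord x))"
proof -
  obtain D where D: "((\<lambda>s. f (x + s *\<^sub>R axis None 1)) has_real_derivative D) (at 0)"
    using smooth_fun_on_differentiable_along_axis[OF assms(3,2)] real_differentiableE by blast
  let ?T = "(\<lambda>s::real. x + s *\<^sub>R axis None 1) -` U"
  have T: "open ?T" "0 \<in> ?T"
    using assms(2) by (auto intro!: open_vimage[OF assms(1)] continuous_intros)
  have "((\<lambda>s. h (s + tcoord x)) has_real_derivative D) (at 0)"
    by (rule has_field_derivative_transform_within_open[OF D T]) (simp add: assms(4) add.commute)
  then have "(h has_real_derivative D) (at (tcoord x))"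
    using DERIV_shift[of h D 0 "tcoord x"] by simp
  then show ?thesis unfolding real_differentiable_def by blast
qed

locale warped_chart =
  fixes I :: "real set" and V :: "(real^'m::finite) set" and U :: "(real^('m option)) set"
    and a :: "real^('m option) \<Rightarrow> real^('m option)^('m option)"
    and ab :: "real^'m \<Rightarrow> real^'m^'m" and h :: "real \<Rightarrow> real"
  assumes U_eq: "U = {x. tcoord x \<in> I \<and> fibre_coord x \<in> V}"
    and alpha: "riemannian_metric_on U a"
    and alpha_breve: "riemannian_metric_on V ab"
    and h_differentiable: "\<And>x. x \<in> U \<Longrightarrow> h differentiable (at (tcoord x))"
    and warped: "\<forall>x\<in>U. \<forall>i j. a x $ i $ j =
                 (case (i, j) of
                    (None, None) \<Rightarrow> 1
                  | (Some p, Some q) \<Rightarrow> (h (tcoord x))^2 * ab (fibre_coord x) $ p $ q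
                  | _ \<Rightarrow> 0)"
begin

lemma open_U: "open U"
  using alpha unfolding riemannian_metric_on_def by blast

lemma fibre_coord_in_V: "x \<in> U \<Longrightarrow> fibre_coord x \<in> V"
  using U_eq by blast

lemma metric_None_left: "x \<in> U \<Longrightarrow> a x $ None $ j = (if j = None then 1 else 0)"
  using warped by (auto split: option.split)

lemma metric_None_right: "x \<in> U \<Longrightarrow> a x $ j $ None = (if j = None then 1 else 0)"
  using warped by (auto split: option.split)

lemma metric_Some_Some:
  "x \<in> U \<Longrightarrow> a x $ Some p $ Some q = (h (tcoord x))\<^sup>2 * ab (fibre_coord x) $ p $ q"
  using warped by simp

lemma breve_symmetric: "y \<in> V \<Longrightarrow> ab y $ i $ j = ab y $ j $ i"
  using alpha_breve unfolding riemannian_metric_on_def by blast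

lemma warping_nonzero:
  assumes x: "x \<in> U"
  shows "h (tcoord x) \<noteq> 0"
proof
  assume h0: "h (tcoord x) = 0"
  define v :: "real^('m option)" where "v = axis (Some undefined) 1"
  have "v \<noteq> 0" unfolding v_def by (simp add: axis_eq_0_iff)
  then have "(\<Sum>i\<in>UNIV. \<Sum>j\<in>UNIV. a x $ i $ j * v $ i * v $ j) > 0"
    using alpha x unfolding riemannian_metric_on_def by blast
  also have "(\<Sum>i\<in>UNIV. \<Sum>j\<in>UNIV. a x $ i $ j * v $ i * v $ j) = a x $ Some undefined $ Some undefined"
    unfolding v_def by (simp add: axis_def if_distrib[of "\<lambda>z. _ * z"] cong: if_cong)
  also have "\<dots> = 0" using metric_Some_Some[OF x] h0 by simp
  finally show False by simp
qed

lemma warping_has_derivative: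
  "x \<in> U \<Longrightarrow> (h has_real_derivative deriv h (tcoord x)) (at (tcoord x))"
  using h_differentiable DERIV_deriv_iff_real_differentiable by blast

lemma pd_metric_None_left: "x \<in> U \<Longrightarrow> pd (\<lambda>z. a z $ None $ j) k x = 0"
  using pd_cong_open[OF open_U, of x "\<lambda>z. a z $ None $ j" "\<lambda>z. if j = None then 1 else 0"]
  by (simp add: metric_None_left)

lemma pd_metric_None_right: "x \<in> U \<Longrightarrow> pd (\<lambda>z. a z $ j $ None) k x = 0"
  using pd_cong_open[OF open_U, of x "\<lambda>z. a z $ j $ None" "\<lambda>z. if j = None then 1 else 0"]
  by (simp add: metric_None_right)

lemma pd_metric_along_t:
  assumes x: "x \<in> U"
  shows "pd (\<lambda>z. a z $ Some p $ Some q) None x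
      = 2 * h (tcoord x) * deriv h (tcoord x) * ab (fibre_coord x) $ p $ q"
proof -
  have "pd (\<lambda>z. a z $ Some p $ Some q) None x
      = pd (\<lambda>z. (h (tcoord z))\<^sup>2 * ab (fibre_coord z) $ p $ q) None x"
    by (rule pd_cong_open[OF open_U x]) (simp add: metric_Some_Some)
  also have "\<dots> = 2 * h (tcoord x) * deriv h (tcoord x) * ab (fibre_coord x) $ p $ q"
  proof (rule pd_tcoord_mult_fibre_None)
    show "((\<lambda>t. (h t)\<^sup>2) has_real_derivative 2 * h (tcoord x) * deriv h (tcoord x)) (at (tcoord x))"
      by (rule DERIV_cong[OF DERIV_power[OF warping_has_derivative[OF x], of 2]]) simp
  qed
  finally show ?thesis .
qed

lemma pd_metric_along_fibre:
  assumes x: "x \<in> U"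
  shows "pd (\<lambda>z. a z $ Some p $ Some q) (Some k) x
      = (h (tcoord x))\<^sup>2 * pd (\<lambda>w. ab w $ p $ q) k (fibre_coord x)"
proof -
  have "pd (\<lambda>z. a z $ Some p $ Some q) (Some k) x
      = pd (\<lambda>z. (h (tcoord z))\<^sup>2 * ab (fibre_coord z) $ p $ q) (Some k) x"
    by (rule pd_cong_open[OF open_U x]) (simp add: metric_Some_Some)
  also have "\<dots> = (h (tcoord x))\<^sup>2 * pd (\<lambda>w. ab w $ p $ q) k (fibre_coord x)"
  proof (rule pd_tcoord_mult_fibre_Some)
    have "smooth_fun_on V (\<lambda>w. ab w $ p $ q)"
      using alpha_breve unfolding riemannian_metric_on_def by blast
    then show "(\<lambda>s. ab (fibre_coord x + s *\<^sub>R axis k 1) $ p $ q) differentiable (at 0)"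
      using fibre_coord_in_V[OF x] by (rule smooth_fun_on_differentiable_along_axis)
  qed
  finally show ?thesis .
qed

lemma inv_metric_breve:
  assumes "y \<in> V"
  shows "inv_metric ab y ** ab y = mat 1" "ab y ** inv_metric ab y = mat 1"
proof -
  have posdef: "\<And>v. v \<noteq> 0 \<Longrightarrow> (\<Sum>i\<in>UNIV. \<Sum>j\<in>UNIV. ab y $ i $ j * v $ i * v $ j) > 0"
    using alpha_breve assms unfolding riemannian_metric_on_def by blast
  show "inv_metric ab y ** ab y = mat 1" "ab y ** inv_metric ab y = mat 1"
    using matrix_inv_posdef[OF posdef] unfolding inv_metric_def by auto
qed

lemma metric_option_block: "x \<in> U \<Longrightarrow> a x = option_block ((h (tcoord x))\<^sup>2) (ab (fibre_coord x))"
  using warped by (simp add: vec_eq_iff option_block_def)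

lemma inv_metric_option_block:
  "x \<in> U \<Longrightarrow> inv_metric a x = option_block (1 / (h (tcoord x))\<^sup>2) (inv_metric ab (fibre_coord x))"
  unfolding inv_metric_def metric_option_block
  by (rule matrix_inv_option_block)
     (simp_all add: inv_metric_breve[unfolded inv_metric_def] fibre_coord_in_V warping_nonzero)

lemma inv_metric_None_left:
  "x \<in> U \<Longrightarrow> inv_metric a x $ None $ j = (if j = None then 1 else 0)"
  by (simp add: inv_metric_option_block option_block_def split: option.split)

lemma inv_metric_Some_None: "x \<in> U \<Longrightarrow> inv_metric a x $ Some r $ None = 0"
  by (simp add: inv_metric_option_block option_block_def)

lemma inv_metric_Some_Some:
  "x \<in> U \<Longrightarrow> inv_metric a x $ Some r $ Some s = inv_metric ab (fibre_coord x) $ r $ s / (h (tcoord x))\<^sup>2"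
  by (simp add: inv_metric_option_block option_block_def)

lemma christoffel_fibre:
  assumes x: "x \<in> U"
  shows "christoffel a (Some r) (Some p) (Some q) x = christoffel ab r p q (fibre_coord x)"
proof -
  let ?y = "fibre_coord x"
  have "(\<Sum>l\<in>UNIV. inv_metric a x $ Some r $ l * (pd (\<lambda>z. a z $ Some q $ l) (Some p) x
        + pd (\<lambda>z. a z $ Some p $ l) (Some q) x - pd (\<lambda>z. a z $ Some p $ Some q) l x))
      = (\<Sum>s\<in>UNIV. inv_metric ab ?y $ r $ s * (pd (\<lambda>z. ab z $ q $ s) p ?y
        + pd (\<lambda>z. ab z $ p $ s) q ?y - pd (\<lambda>z. ab z $ p $ q) s ?y))"
    unfolding sum_UNIV_option
    by (simp add: inv_metric_Some_None[OF x])
       (rule sum.cong, simp_all add: inv_metric_Some_Some[OF x] pd_metric_along_fibre[OF x]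
         field_simps warping_nonzero[OF x])
  then show ?thesis unfolding christoffel_def by simp
qed

lemma christoffel_t_fibre:
  "x \<in> U \<Longrightarrow> christoffel a None (Some p) (Some q) x
     = - h (tcoord x) * deriv h (tcoord x) * ab (fibre_coord x) $ p $ q"
  unfolding christoffel_def sum_UNIV_option
  by (simp add: inv_metric_None_left pd_metric_None_right pd_metric_along_t)

lemma christoffel_fibre_t:
  assumes x: "x \<in> U"
  shows "christoffel a (Some r) (Some p) None x
     = (if r = p then deriv h (tcoord x) / h (tcoord x) else 0)"
proof -
  let ?y = "fibre_coord x" and ?t = "tcoord x"
  have y: "?y \<in> V" using fibre_coord_in_V[OF x] .
  have "(\<Sum>l\<in>UNIV. inv_metric a x $ Some r $ l * (pd (\<lambda>z. a z $ None $ l) (Some p) x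
        + pd (\<lambda>z. a z $ Some p $ l) None x - pd (\<lambda>z. a z $ Some p $ None) l x))
      = (\<Sum>s\<in>UNIV. (2 * deriv h ?t / h ?t) * (inv_metric ab ?y $ r $ s * ab ?y $ s $ p))"
    unfolding sum_UNIV_option
    by (simp add: inv_metric_Some_None[OF x] pd_metric_None_left[OF x] pd_metric_None_right[OF x])
       (rule sum.cong, simp_all only: inv_metric_Some_Some[OF x] pd_metric_along_t[OF x]
         breve_symmetric[OF y, of p], simp add: power2_eq_square warping_nonzero[OF x])
  also have "\<dots> = (2 * deriv h ?t / h ?t) * (inv_metric ab ?y ** ab ?y) $ r $ p"
    by (simp add: matrix_matrix_mult_def sum_distrib_left)
  also have "\<dots> = (2 * deriv h ?t / h ?t) * (if r = p then 1 else 0)"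
    by (simp add: inv_metric_breve(1)[OF y] mat_def)
  finally show ?thesis unfolding christoffel_def by simp
qed

lemma christoffel_t_t_t: "x \<in> U \<Longrightarrow> christoffel a None None None x = 0"
  unfolding christoffel_def sum_UNIV_option
  by (simp add: inv_metric_None_left pd_metric_None_left pd_metric_None_right)

text \<open>The Gauss equation of the fibres \<open>t = const\<close>, which are totally umbilic with
  second fundamental form \<open>h h' ab\<close>.\<close>

lemma riemann_fibre:
  assumes x: "x \<in> U"
  shows "riemann a (Some m) (Some r) (Some p) (Some q) x
     = riemann ab m r p q (fibre_coord x) - (deriv h (tcoord x))\<^sup>2 *
       ((if m = p then ab (fibre_coord x) $ r $ q else 0) - (if m = q then ab (fibre_coord x) $ r $ p else 0))"
proof -
  let ?y = "fibre_coord x" and ?t = "tcoord x"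
  have pd_christoffel: "pd (christoffel a (Some m) (Some r) (Some l)) (Some k) x
      = pd (christoffel ab m r l) k ?y" for l k
  proof -
    have "pd (christoffel a (Some m) (Some r) (Some l)) (Some k) x
        = pd (\<lambda>z. christoffel ab m r l (fibre_coord z)) (Some k) x"
      by (rule pd_cong_open[OF open_U x]) (simp add: christoffel_fibre)
    then show ?thesis by (simp add: pd_fibre_coord)
  qed
  have "(\<Sum>n\<in>UNIV. christoffel a (Some m) (Some p) n x * christoffel a n (Some r) (Some q) x
               - christoffel a (Some m) (Some q) n x * christoffel a n (Some r) (Some p) x)
      = (\<Sum>n\<in>UNIV. christoffel ab m p n ?y * christoffel ab n r q ?y
               - christoffel ab m q n ?y * christoffel ab n r p ?y)
        - (deriv h ?t)\<^sup>2 * ((if m = p then ab ?y $ r $ q else 0) - (if m = q then ab ?y $ r $ p else 0))"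
    unfolding sum_UNIV_option using warping_nonzero[OF x]
    by (simp add: christoffel_fibre[OF x] christoffel_t_fibre[OF x] christoffel_fibre_t[OF x]
        power2_eq_square)
  then show ?thesis unfolding riemann_def pd_christoffel by simp
qed

lemma metric_ip_fibre_lift:
  "x \<in> U \<Longrightarrow> metric_ip a x (option_vec 0 v) (option_vec 0 v)
     = (h (tcoord x))\<^sup>2 * metric_ip ab (fibre_coord x) v v"
  by (simp add: metric_ip_def sum_UNIV_option metric_Some_Some sum_distrib_left mult_ac)

lemma lower_fibre_lift:
  "x \<in> U \<Longrightarrow> lower a x (option_vec 0 v) (Some p) = (h (tcoord x))\<^sup>2 * lower ab (fibre_coord x) v p"
  by (simp add: lower_def sum_UNIV_option metric_Some_Some sum_distrib_left mult_ac)

lemma riemann_curv_fibre_lift: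
  assumes x: "x \<in> U"
  shows "riemann_curv a (Some m) (Some p) x (option_vec 0 v)
     = riemann_curv ab m p (fibre_coord x) v - (deriv h (tcoord x))\<^sup>2 *
       (metric_ip ab (fibre_coord x) v v * (if m = p then 1 else 0) - v $ m * lower ab (fibre_coord x) v p)"
proof -
  let ?y = "fibre_coord x" and ?h' = "deriv h (tcoord x)"
  have y: "?y \<in> V" using fibre_coord_in_V[OF x] .
  have "riemann_curv a (Some m) (Some p) x (option_vec 0 v)
      = (\<Sum>r\<in>UNIV. \<Sum>q\<in>UNIV. riemann a (Some m) (Some r) (Some p) (Some q) x * v $ r * v $ q)"
    unfolding riemann_curv_def sum_UNIV_option by simp
  also have "\<dots> = (\<Sum>r\<in>UNIV. \<Sum>q\<in>UNIV. riemann ab m r p q ?y * v $ r * v $ q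
       - ?h'\<^sup>2 * ((if m = p then ab ?y $ r $ q * v $ r * v $ q else 0)
                    - (if m = q then ab ?y $ r $ p * v $ r * v $ q else 0)))"
    by (intro sum.cong refl) (simp add: riemann_fibre[OF x] algebra_simps)
  also have "\<dots> = riemann_curv ab m p ?y v
       - ?h'\<^sup>2 * ((\<Sum>r\<in>UNIV. \<Sum>q\<in>UNIV. if m = p then ab ?y $ r $ q * v $ r * v $ q else 0)
                  - (\<Sum>r\<in>UNIV. \<Sum>q\<in>UNIV. if m = q then ab ?y $ r $ p * v $ r * v $ q else 0))"
    unfolding riemann_curv_def by (simp only: sum_subtractf sum_distrib_left right_diff_distrib)
  also have "(\<Sum>r\<in>UNIV. \<Sum>q\<in>UNIV. if m = p then ab ?y $ r $ q * v $ r * v $ q else 0)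
      = metric_ip ab ?y v v * (if m = p then 1 else 0)"
    by (simp add: metric_ip_def)
  also have "(\<Sum>r\<in>UNIV. \<Sum>q\<in>UNIV. if m = q then ab ?y $ r $ p * v $ r * v $ q else 0)
      = v $ m * lower ab ?y v p"
    unfolding lower_def sum_distrib_left
    by (intro sum.cong refl) (simp add: breve_symmetric[OF y, of _ p] mult_ac)
  finally show ?thesis .
qed

lemma cov_deriv_1form_h_dt:
  assumes beta: "\<forall>z\<in>U. \<forall>i. b z $ i = (if i = None then h (tcoord z) else 0)" and x: "x \<in> U"
  shows "cov_deriv_1form a b None None x = deriv h (tcoord x)"
proof -
  have "pd (\<lambda>z. b z $ None) None x = pd (\<lambda>z. h (tcoord z) * 1) None x"
    by (rule pd_cong_open[OF open_U x]) (simp add: beta)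
  also have "\<dots> = deriv h (tcoord x)"
    using pd_tcoord_mult_fibre_None[OF warping_has_derivative[OF x], of "\<lambda>_. 1"] by simp
  finally show ?thesis
    unfolding cov_deriv_1form_def sum_UNIV_option using x by (simp add: beta christoffel_t_t_t)
qed

lemma norm2_1form_h_dt:
  assumes beta: "\<forall>z\<in>U. \<forall>i. b z $ i = (if i = None then h (tcoord z) else 0)" and x: "x \<in> U"
  shows "norm2_1form a b x = (h (tcoord x))\<^sup>2"
  unfolding norm2_1form_def sum_UNIV_option using x
  by (simp add: beta inv_metric_None_left power2_eq_square)

lemma warping_ode:
  assumes beta: "\<forall>z\<in>U. \<forall>i. b z $ i = (if i = None then h (tcoord z) else 0)"
    and cov: "\<exists>c. \<forall>x\<in>U. (\<forall>i j. cov_deriv_1form a b i j x = c x * a x $ i $ j)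
                \<and> (c x)\<^sup>2 = \<kappa> - \<mu> * norm2_1form a b x"
    and x: "x \<in> U"
  shows "(deriv h (tcoord x))\<^sup>2 = \<kappa> - \<mu> * (h (tcoord x))\<^sup>2"
proof -
  obtain c where c: "\<forall>i j. cov_deriv_1form a b i j x = c x * a x $ i $ j"
    and c_sq: "(c x)\<^sup>2 = \<kappa> - \<mu> * norm2_1form a b x"
    using cov x by blast
  have "deriv h (tcoord x) = c x"
    using c cov_deriv_1form_h_dt[OF beta x] metric_None_left[OF x, of None] by simp
  then show ?thesis using c_sq norm2_1form_h_dt[OF beta x] by simp
qed

lemma riemann_curv_breve_isotropic:
  assumes curv: "\<forall>x\<in>U. \<forall>y i j. riemann_curv a i j x y =
                 \<mu> * (metric_ip a x y y * (if i = j then 1 else 0) - y $ i * lower a x y j)"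
    and ode: "\<And>x. x \<in> U \<Longrightarrow> (deriv h (tcoord x))\<^sup>2 = \<kappa> - \<mu> * (h (tcoord x))\<^sup>2"
    and "I \<noteq> {}" and y: "y \<in> V"
  shows "riemann_curv ab m p y v
     = \<kappa> * (metric_ip ab y v v * (if m = p then 1 else 0) - v $ m * lower ab y v p)"
proof -
  obtain t where "t \<in> I" using \<open>I \<noteq> {}\<close> by blast
  then have x: "option_vec t y \<in> U" using U_eq y by simp
  define D where "D = metric_ip ab y v v * (if m = p then 1 else 0) - v $ m * lower ab y v p"
  have "riemann_curv ab m p y v - (deriv h t)\<^sup>2 * D = \<mu> * (h t)\<^sup>2 * D"
    using riemann_curv_fibre_lift[OF x, of m p v] curv x unfolding D_def
    by (simp add: metric_ip_fibre_lift[OF x] lower_fibre_lift[OF x] algebra_simps)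
  then have "riemann_curv ab m p y v = ((deriv h t)\<^sup>2 + \<mu> * (h t)\<^sup>2) * D"
    by (simp add: algebra_simps)
  also have "(deriv h t)\<^sup>2 + \<mu> * (h t)\<^sup>2 = \<kappa>"
    using ode[OF x] by simp
  finally show ?thesis unfolding D_def .
qed

end

theorem lemma3p2:
  fixes a :: "real^('m::finite option) \<Rightarrow> real^('m option)^('m option)"
    and b :: "real^('m option) \<Rightarrow> real^('m option)"
    and ab :: "real^'m \<Rightarrow> real^'m^'m"
    and h :: "real \<Rightarrow> real"
    and I :: "real set" and V :: "(real^'m) set"
    and U :: "(real^('m option)) set"
    and \<mu> \<kappa> :: real
  assumes I: "open I" "I \<noteq> {}"
    and V: "open V"
    and U: "U = {x. tcoord x \<in> I \<and> fibre_coord x \<in> V}"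
    and alpha: "riemannian_metric_on U a"
    and alpha_breve: "riemannian_metric_on V ab"
    and beta_smooth: "\<forall>i. smooth_fun_on U (\<lambda>x. b x $ i)"
    and beta_nonzero: "\<exists>x\<in>U. b x \<noteq> 0"
    and beta_closed: "closed_1form_on U b"
    and curv: "\<forall>x\<in>U. \<forall>y i j. riemann_curv a i j x y =
                 \<mu> * (metric_ip a x y y * (if i = j then 1 else 0) - y $ i * lower a x y j)"
    and cov: "\<exists>c::real^('m option) \<Rightarrow> real. \<forall>x\<in>U.
                 (\<forall>i j. cov_deriv_1form a b i j x = c x * a x $ i $ j)
                 \<and> (c x)^2 = \<kappa> - \<mu> * norm2_1form a b x"
    and warped: "\<forall>x\<in>U. \<forall>i j. a x $ i $ j =
                 (case (i, j) of
                    (None, None) \<Rightarrow> 1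
                  | (Some p, Some q) \<Rightarrow> (h (tcoord x))^2 * ab (fibre_coord x) $ p $ q
                  | _ \<Rightarrow> 0)"
    and beta_form: "\<forall>x\<in>U. \<forall>i. b x $ i = (if i = None then h (tcoord x) else 0)"
  shows "const_sectional_curvature_on V ab \<kappa>"
proof -
  have differentiable_h: "h differentiable (at (tcoord x))" if "x \<in> U" for x
  proof (rule differentiable_at_tcoord_if_smooth[OF _ that])
    show "open U" using alpha unfolding riemannian_metric_on_def by blast
    show "smooth_fun_on U (\<lambda>z. b z $ None)" using beta_smooth ..
  qed (simp add: beta_form)
  interpret warped_chart I V U a ab h
    using U alpha alpha_breve differentiable_h warped by unfold_locales
  show ?thesis
    using alpha_breve riemann_curv_breve_isotropic[OF curv warping_ode[OF beta_form cov] I(2)]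
    by (rule const_sectional_curvature_onI)
qed

end
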